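(* Let $G$ be a connected edge-stable equimatchable graph with a cut vertex $v$. Then: (i) if $v$ is a weak vertex in $G$, then every vertex of $N(v)$ is a strong vertex in $G-v$; (ii) if $v$ is a strong vertex in $G$, then every vertex of $N(v)$ is a weak vertex in $G-v$, and moreover $G\setminus\{v,w\}$ is an edge-stable equimatchable graph for each $w\in N(v)$.
   Context: All graphs are finite and simple. A graph is equimatchable if all its maximal matchings have the same cardinality; an equimatchable graph $G$ is edge-stable if $G\setminus e$ (delete edge $e$, keep vertices) is equimatchable for every $e\in E(G)$. A vertex $v$ of a graph $H$ is strong in $H$ if every maximal matching of $H$ saturates $v$ (has $v$ as an endpoint of one of its edges), and weak otherwise. $G\setminus\{v,w\}$ is the subgraph induced by $V(G)\setminus\{v,w\}$. *)

theory Defs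
  imports Main
begin

definition simple_graph :: "'a set \<Rightarrow> 'a set set \<Rightarrow> bool" where
  "simple_graph V E \<longleftrightarrow> finite V \<and>
     (\<forall>e\<in>E. \<exists>u w. e = {u, w} \<and> u \<noteq> w \<and> u \<in> V \<and> w \<in> V)"

definition matching :: "'a set set \<Rightarrow> 'a set set \<Rightarrow> bool" where
  "matching E M \<longleftrightarrow> M \<subseteq> E \<and> (\<forall>e1\<in>M. \<forall>e2\<in>M. e1 \<noteq> e2 \<longrightarrow> e1 \<inter> e2 = {})"

definition maximal_matching :: "'a set set \<Rightarrow> 'a set set \<Rightarrow> bool" where
  "maximal_matching E M \<longleftrightarrow> matching E M \<and>
     (\<forall>M'. matching E M' \<and> M \<subseteq> M' \<longrightarrow> M' = M)"

definition equimatchable :: "'a set set \<Rightarrow> bool" where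
  "equimatchable E \<longleftrightarrow>
     (\<forall>M M'. maximal_matching E M \<and> maximal_matching E M' \<longrightarrow> card M = card M')"

definition edge_stable :: "'a set set \<Rightarrow> bool" where
  "edge_stable E \<longleftrightarrow> equimatchable E \<and> (\<forall>e\<in>E. equimatchable (E - {e}))"

definition strong_vertex :: "'a set set \<Rightarrow> 'a \<Rightarrow> bool" where
  "strong_vertex E v \<longleftrightarrow> (\<forall>M. maximal_matching E M \<longrightarrow> v \<in> \<Union>M)"

definition weak_vertex :: "'a set set \<Rightarrow> 'a \<Rightarrow> bool" where
  "weak_vertex E v \<longleftrightarrow> \<not> strong_vertex E v"

definition neighbours :: "'a set set \<Rightarrow> 'a \<Rightarrow> 'a set" where
  "neighbours E v = {u. {u, v} \<in> E}"

definition del_verts :: "'a set set \<Rightarrow> 'a set \<Rightarrow> 'a set set" where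
  "del_verts E S = {e \<in> E. e \<inter> S = {}}"

definition reach_rel :: "'a set \<Rightarrow> 'a set set \<Rightarrow> ('a \<times> 'a) set" where
  "reach_rel V E = {(x, y). x \<in> V \<and> y \<in> V \<and> (x, y) \<in> {(a, b). {a, b} \<in> E}\<^sup>*}"

definition components :: "'a set \<Rightarrow> 'a set set \<Rightarrow> 'a set set" where
  "components V E = V // reach_rel V E"

definition connected_graph :: "'a set \<Rightarrow> 'a set set \<Rightarrow> bool" where
  "connected_graph V E \<longleftrightarrow> card (components V E) = 1"

definition cut_vertex :: "'a set \<Rightarrow> 'a set set \<Rightarrow> 'a \<Rightarrow> bool" where
  "cut_vertex V E v \<longleftrightarrow> v \<in> V \<and>
     card (components (V - {v}) (del_verts E {v})) > card (components V E)"

end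

theory Submission
  imports Defs
begin

text \<open>
  (ii) For an edge vw, adding vw to a maximal matching of G - {v, w} gives a maximal matching
  of G, so G - {v, w} inherits equimatchability, and edge by edge also edge-stability. If such a
  matching N missed an edge e of G - v, then N + e would extend to a maximal matching of G, which
  by equimatchability has only |N| + 1 edges, hence is N + e and misses v. So when v is strong,
  N is maximal in G - v and leaves w unsaturated.

  (i) Let M be a maximal matching of G missing v and suppose a neighbour u of v is missed by a
  maximal matching P of G - v. Let A be the component of u in G - v, x a neighbour of v outside
  A (v is a cut vertex) and T a maximal matching of G - A - {v, x}. Both vx + (P inside A) + T
  and vx + (M inside A) + T are maximal in G, so P and M have equally many edges inside A; but
  then vu + (P inside A) + (M outside A) is a maximal matching of G with |M| + 1 edges.
\<close>

lemma matching_subset: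
  assumes "matching F M" "F \<subseteq> E" "M' \<subseteq> M"
  shows "matching E M'"
  using assms unfolding matching_def by blast

lemma matching_insert:
  assumes "matching E M" "f \<in> E" "\<forall>e\<in>M. e \<inter> f = {}"
  shows "matching E (insert f M)"
  using assms unfolding matching_def by (auto simp: Int_commute)

lemma matching_Un:
  assumes "matching E M1" "matching E M2" "\<forall>e1\<in>M1. \<forall>e2\<in>M2. e1 \<inter> e2 = {}"
  shows "matching E (M1 \<union> M2)"
  unfolding matching_def
proof (intro conjI ballI impI)
  show "M1 \<union> M2 \<subseteq> E" using assms(1,2) by (simp add: matching_def)
  have "\<forall>e1\<in>M1. \<forall>e2\<in>M1. e1 \<noteq> e2 \<longrightarrow> e1 \<inter> e2 = {}"
    and "\<forall>e1\<in>M2. \<forall>e2\<in>M2. e1 \<noteq> e2 \<longrightarrow> e1 \<inter> e2 = {}"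
    using assms(1,2) by (simp_all add: matching_def)
  moreover fix e1 e2 assume "e1 \<in> M1 \<union> M2" "e2 \<in> M1 \<union> M2" "e1 \<noteq> e2"
  ultimately show "e1 \<inter> e2 = {}"
    using assms(3) by (metis Int_commute UnE)
qed

lemma maximal_matching_iff_covers:
  assumes "{} \<notin> E"
  shows "maximal_matching E M \<longleftrightarrow> matching E M \<and> (\<forall>e\<in>E. e \<inter> \<Union>M \<noteq> {})"
proof
  assume max: "maximal_matching E M"
  have "e \<inter> \<Union>M \<noteq> {}" if "e \<in> E" for e
  proof
    assume "e \<inter> \<Union>M = {}"
    then have "matching E (insert e M)"
      using max \<open>e \<in> E\<close> by (intro matching_insert) (auto simp: maximal_matching_def)
    then have "e \<in> M" using max unfolding maximal_matching_def by blast
    then have "e = {}" using \<open>e \<inter> \<Union>M = {}\<close> by auto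
    with \<open>e \<in> E\<close> assms show False by simp
  qed
  with max show "matching E M \<and> (\<forall>e\<in>E. e \<inter> \<Union>M \<noteq> {})"
    by (simp add: maximal_matching_def)
next
  assume "matching E M \<and> (\<forall>e\<in>E. e \<inter> \<Union>M \<noteq> {})"
  then have M: "matching E M" "\<forall>e\<in>E. e \<inter> \<Union>M \<noteq> {}" by auto
  show "maximal_matching E M"
    unfolding maximal_matching_def
  proof (intro conjI allI impI)
    fix M' assume M': "matching E M' \<and> M \<subseteq> M'"
    show "M' = M"
    proof (rule ccontr)
      assume "M' \<noteq> M"
      with M' obtain e where e: "e \<in> M'" "e \<notin> M" by blast
      have "e \<in> E" using M' e(1) by (auto simp: matching_def)
      with M(2) obtain y where "y \<in> e" "y \<in> \<Union>M" by blast
      then obtain f where f: "f \<in> M" "e \<inter> f \<noteq> {}" by blast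
      then have "f \<in> M'" "f \<noteq> e" using M' e(2) by auto
      with M' e(1) f(2) show False unfolding matching_def by blast
    qed
  qed (rule M(1))
qed

lemma exists_maximal_matching_superset:
  assumes "finite E" "matching E M0"
  obtains M where "maximal_matching E M" "M0 \<subseteq> M"
proof -
  let ?S = "{M. matching E M \<and> M0 \<subseteq> M}"
  have "finite ?S"
    by (rule finite_subset[of _ "Pow E"]) (use assms(1) in \<open>auto simp: matching_def\<close>)
  moreover have "?S \<noteq> {}" using assms(2) by auto
  ultimately obtain M where M: "M \<in> ?S" "\<forall>M'\<in>?S. M \<le> M' \<longrightarrow> M = M'"
    by (meson finite_has_maximal)
  then have "maximal_matching E M"
    unfolding maximal_matching_def by auto
  with M(1) show thesis by (intro that) auto
qed

lemma exists_maximal_matching: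
  assumes "finite E"
  obtains M where "maximal_matching E M"
  using exists_maximal_matching_superset[OF assms, of "{}"] by (auto simp: matching_def)

lemma del_verts_subset: "del_verts E S \<subseteq> E"
  by (auto simp: del_verts_def)

lemma matching_del_verts_avoids: "matching (del_verts E S) N \<Longrightarrow> \<Union>N \<inter> S = {}"
  by (auto simp: matching_def del_verts_def)

lemma maximal_matching_insert_edge:
  assumes "{} \<notin> E" "{a, b} \<in> E" "maximal_matching (del_verts E {a, b}) N"
  shows "maximal_matching E (insert {a, b} N)"
proof -
  have "{} \<notin> del_verts E {a, b}" using assms(1) del_verts_subset by blast
  then have N: "matching (del_verts E {a, b}) N" "\<forall>e\<in>del_verts E {a, b}. e \<inter> \<Union>N \<noteq> {}"
    using assms(3) maximal_matching_iff_covers by blast+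
  then have "matching E (insert {a, b} N)"
    using assms(2) del_verts_subset
    by (intro matching_insert matching_subset[OF N(1)]) (auto simp: matching_def del_verts_def)
  moreover have "\<forall>e\<in>E. e \<inter> \<Union>(insert {a, b} N) \<noteq> {}"
    using N(2) by (auto simp: del_verts_def)
  ultimately show ?thesis
    using assms(1) maximal_matching_iff_covers by blast
qed

lemma card_insert_edge:
  assumes "finite E" "matching (del_verts E {a, b}) N"
  shows "card (insert {a, b} N) = card N + 1"
proof -
  have "N \<subseteq> del_verts E {a, b}" using assms(2) by (simp add: matching_def)
  then have "finite N" "{a, b} \<notin> N"
    using assms(1) finite_subset[OF _ assms(1)] by (auto simp: del_verts_def)
  then show ?thesis by simp
qed

lemma equimatchable_del_edge_ends:
  assumes "equimatchable E" "finite E" "{} \<notin> E" "{a, b} \<in> E"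
  shows "equimatchable (del_verts E {a, b})"
  unfolding equimatchable_def
proof (intro allI impI)
  fix N N' assume "maximal_matching (del_verts E {a, b}) N \<and> maximal_matching (del_verts E {a, b}) N'"
  then have "maximal_matching E (insert {a, b} N)" "maximal_matching E (insert {a, b} N')"
    "matching (del_verts E {a, b}) N" "matching (del_verts E {a, b}) N'"
    using maximal_matching_insert_edge[OF assms(3,4)] by (auto simp: maximal_matching_def)
  then show "card N = card N'"
    using assms(1) card_insert_edge[OF assms(2)] unfolding equimatchable_def by (metis add_right_cancel)
qed

lemma edge_stable_del_edge_ends:
  assumes "edge_stable E" "finite E" "{} \<notin> E" "{a, b} \<in> E"
  shows "edge_stable (del_verts E {a, b})"
  unfolding edge_stable_def
proof (intro conjI ballI)
  show "equimatchable (del_verts E {a, b})"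
    using assms by (intro equimatchable_del_edge_ends) (auto simp: edge_stable_def)
  fix e assume e: "e \<in> del_verts E {a, b}"
  then have "del_verts E {a, b} - {e} = del_verts (E - {e}) {a, b}"
    "{a, b} \<in> E - {e}" "equimatchable (E - {e})"
    using assms(1,4) by (auto simp: del_verts_def edge_stable_def)
  then show "equimatchable (del_verts E {a, b} - {e})"
    using assms(2,3) by (metis equimatchable_del_edge_ends finite_Diff Diff_iff)
qed

lemma strong_vertex_neighbour_weak:
  assumes "finite E" "{} \<notin> E" "equimatchable E" "strong_vertex E v" "{u, v} \<in> E"
  shows "weak_vertex (del_verts E {v}) u"
proof -
  have vu: "{v, u} \<in> E" using assms(5) by (simp add: insert_commute)
  have "finite (del_verts E {v, u})" using assms(1) by (simp add: del_verts_def)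
  then obtain N where N: "maximal_matching (del_verts E {v, u}) N"
    by (rule exists_maximal_matching)
  have "{} \<notin> del_verts E {v, u}" using assms(2) del_verts_subset by blast
  then have Nm: "matching (del_verts E {v, u}) N"
    using N maximal_matching_iff_covers by blast
  have NE: "N \<subseteq> del_verts E {v, u}" using Nm by (simp add: matching_def)
  show ?thesis
  proof (cases "\<forall>e\<in>del_verts E {v}. e \<inter> \<Union>N \<noteq> {}")
    case True
    have "matching (del_verts E {v}) N"
      using Nm by (rule matching_subset) (auto simp: del_verts_def)
    with True have "maximal_matching (del_verts E {v}) N"
      using assms(2) del_verts_subset maximal_matching_iff_covers by blast
    moreover have "u \<notin> \<Union>N" using NE by (auto simp: del_verts_def)
    ultimately show ?thesis unfolding weak_vertex_def strong_vertex_def by blast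
  next
    case False
    then obtain e where e: "e \<in> del_verts E {v}" "e \<inter> \<Union>N = {}" by blast
    have "matching E (insert e N)"
      using e by (intro matching_insert matching_subset[OF Nm]) (auto simp: del_verts_def)
    then obtain Z where Z: "maximal_matching E Z" "insert e N \<subseteq> Z"
      using exists_maximal_matching_superset[OF assms(1)] by blast
    have "e \<noteq> {}" using e assms(2) by (auto simp: del_verts_def)
    with e(2) have "e \<notin> N" by blast
    \<comment> \<open>Equimatchability leaves no room to extend N + e, so this maximal matching misses v.\<close>
    then have "card (insert e N) = card (insert {v, u} N)"
      using card_insert_edge[OF assms(1) Nm] finite_subset[OF NE] assms(1)
      by (simp add: del_verts_def)
    also have "\<dots> = card Z"
      using assms(3) Z(1) maximal_matching_insert_edge[OF assms(2) vu N]
      unfolding equimatchable_def by blast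
    finally have "Z = insert e N"
      using Z finite_subset[OF _ assms(1)]
      by (metis card_subset_eq maximal_matching_def matching_def)
    then have "v \<notin> \<Union>Z" using e NE by (auto simp: del_verts_def)
    with assms(4) Z(1) show ?thesis unfolding strong_vertex_def by blast
  qed
qed

lemma simple_graph_finite_edges: "simple_graph V E \<Longrightarrow> finite E"
  unfolding simple_graph_def by (rule finite_subset[of _ "Pow V"]) auto

lemma simple_graph_edge_doubleton: "simple_graph V E \<Longrightarrow> e \<in> E \<Longrightarrow> \<exists>a b. e = {a, b}"
  unfolding simple_graph_def by blast

lemma simple_graph_no_empty_edge: "simple_graph V E \<Longrightarrow> {} \<notin> E"
  using simple_graph_edge_doubleton by blast

lemma simple_graph_edge_ends:
  assumes "simple_graph V E" "{a, b} \<in> E"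
  shows "a \<noteq> b" "a \<in> V" "b \<in> V"
  using assms unfolding simple_graph_def by (metis doubleton_eq_iff)+

abbreviation adj :: "'a set set \<Rightarrow> ('a \<times> 'a) set" where
  "adj E \<equiv> {(a, b). {a, b} \<in> E}"

lemma sym_rtrancl_adj: "sym ((adj E)\<^sup>*)"
  by (rule sym_rtrancl) (auto simp: sym_def insert_commute)

lemma rtrancl_adj_sym: "(a, b) \<in> (adj E)\<^sup>* \<Longrightarrow> (b, a) \<in> (adj E)\<^sup>*"
  by (rule symD[OF sym_rtrancl_adj])

lemma equiv_reach_rel: "equiv V (reach_rel V E)"
  using sym_rtrancl_adj[of E]
  unfolding equiv_def refl_on_def trans_def reach_rel_def
  by (auto simp: sym_def intro: rtrancl_trans)

lemma connected_graph_rtrancl_adj: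
  assumes "connected_graph V E" "a \<in> V" "b \<in> V"
  shows "(a, b) \<in> (adj E)\<^sup>*"
proof -
  from assms(1) obtain C where C: "V // reach_rel V E = {C}"
    unfolding connected_graph_def components_def by (meson card_1_singletonE)
  have "reach_rel V E `` {a} \<in> V // reach_rel V E" "reach_rel V E `` {b} \<in> V // reach_rel V E"
    using assms(2,3) by (auto intro: quotientI)
  with C have "reach_rel V E `` {a} = reach_rel V E `` {b}" by simp
  then have "(a, b) \<in> reach_rel V E"
    using eq_equiv_class_iff[OF equiv_reach_rel assms(2,3)] by blast
  then show ?thesis by (simp add: reach_rel_def)
qed

lemma quotient_card_gt_1_unrelated:
  assumes "equiv A R" "a \<in> A" "1 < card (A // R)"
  obtains b where "b \<in> A" "(a, b) \<notin> R"
proof -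
  have "\<not> A // R \<subseteq> {R `` {a}}"
  proof
    assume "A // R \<subseteq> {R `` {a}}"
    then have "card (A // R) \<le> card {R `` {a}}" by (intro card_mono) simp_all
    with assms(3) show False by simp
  qed
  then obtain X where "X \<in> A // R" "X \<noteq> R `` {a}" by blast
  then obtain b where "b \<in> A" "R `` {b} \<noteq> R `` {a}" by (metis quotientE)
  with assms(1) have "(a, b) \<notin> R" by (metis equiv_class_eq)
  with \<open>b \<in> A\<close> show thesis by (rule that)
qed

lemma rtrancl_adj_del_vertex_avoids:
  "(w, y) \<in> (adj (del_verts E {v}))\<^sup>* \<Longrightarrow> w \<noteq> v \<Longrightarrow> y \<noteq> v"
  by (induction rule: rtrancl_induct) (auto simp: del_verts_def)

lemma rtrancl_adj_avoiding_or_via_neighbour: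
  assumes "(w, z) \<in> (adj E)\<^sup>*" "w \<noteq> v"
  shows "(w, z) \<in> (adj (del_verts E {v}))\<^sup>* \<or>
         (\<exists>x. {x, v} \<in> E \<and> (w, x) \<in> (adj (del_verts E {v}))\<^sup>*)"
  using assms(1)
proof (induction rule: rtrancl_induct)
  case (step y z)
  have yz: "{y, z} \<in> E" using step.hyps(2) by simp
  from step.IH show ?case
  proof
    assume wy: "(w, y) \<in> (adj (del_verts E {v}))\<^sup>*"
    show ?case
    proof (cases "z = v")
      case True
      with wy yz show ?thesis by blast
    next
      case False
      moreover have "y \<noteq> v" using rtrancl_adj_del_vertex_avoids[OF wy assms(2)] .
      ultimately have "(y, z) \<in> adj (del_verts E {v})"
        using yz by (auto simp: del_verts_def)
      with wy show ?thesis by (meson rtrancl.rtrancl_into_rtrancl)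
    qed
  qed blast
qed simp

lemma cut_vertex_other_neighbour:
  assumes "simple_graph V E" "connected_graph V E" "cut_vertex V E v" "{u, v} \<in> E"
  obtains x where "{x, v} \<in> E" "(u, x) \<notin> (adj (del_verts E {v}))\<^sup>*"
proof -
  let ?R = "reach_rel (V - {v}) (del_verts E {v})"
  have u: "u \<in> V - {v}" using simple_graph_edge_ends[OF assms(1,4)] by blast
  have "1 < card ((V - {v}) // ?R)"
    using assms(2,3) by (simp add: cut_vertex_def connected_graph_def components_def)
  then obtain w where w: "w \<in> V - {v}" "(u, w) \<notin> ?R"
    using quotient_card_gt_1_unrelated[OF equiv_reach_rel u] by blast
  then have uw: "(u, w) \<notin> (adj (del_verts E {v}))\<^sup>*"
    using u by (simp add: reach_rel_def)
  have "(w, u) \<in> (adj E)\<^sup>*"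
    using connected_graph_rtrancl_adj[OF assms(2)] u w(1) by blast
  moreover have "(w, u) \<notin> (adj (del_verts E {v}))\<^sup>*"
    using uw rtrancl_adj_sym[of w u] by blast
  ultimately obtain x where x: "{x, v} \<in> E" "(w, x) \<in> (adj (del_verts E {v}))\<^sup>*"
    using rtrancl_adj_avoiding_or_via_neighbour[of w u E v] w(1) by blast
  have "(u, x) \<notin> (adj (del_verts E {v}))\<^sup>*"
  proof
    assume "(u, x) \<in> (adj (del_verts E {v}))\<^sup>*"
    moreover have "(x, w) \<in> (adj (del_verts E {v}))\<^sup>*"
      using x(2) by (rule rtrancl_adj_sym)
    ultimately show False using uw by (meson rtrancl_trans)
  qed
  with x(1) show thesis by (rule that)
qed

definition edge_closed :: "'a set set \<Rightarrow> 'a set \<Rightarrow> bool" where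
  "edge_closed E A \<longleftrightarrow> (\<forall>e\<in>E. e \<inter> A \<noteq> {} \<longrightarrow> e \<subseteq> A)"

lemma edge_closed_rtrancl_adj:
  assumes "\<forall>e\<in>E. \<exists>a b. e = {a, b}"
  shows "edge_closed E ((adj E)\<^sup>* `` {u})"
  unfolding edge_closed_def
proof (intro ballI impI)
  fix e assume e: "e \<in> E" "e \<inter> (adj E)\<^sup>* `` {u} \<noteq> {}"
  then obtain a b where ab: "e = {a, b}" using assms by blast
  with e have "(a, b) \<in> adj E" "(b, a) \<in> adj E" "(u, a) \<in> (adj E)\<^sup>* \<or> (u, b) \<in> (adj E)\<^sup>*"
    by (auto simp: insert_commute)
  then show "e \<subseteq> (adj E)\<^sup>* `` {u}"
    using ab by (auto intro: rtrancl_into_rtrancl)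
qed

lemma edge_closed_restrict_inside:
  assumes "matching F N" "\<forall>e\<in>F. e \<inter> \<Union>N \<noteq> {}" "edge_closed F A"
  shows "matching F {e\<in>N. e \<subseteq> A}" "\<Union>{e\<in>N. e \<subseteq> A} \<subseteq> A"
    and "\<forall>e\<in>F. e \<inter> A \<noteq> {} \<longrightarrow> e \<inter> \<Union>{e\<in>N. e \<subseteq> A} \<noteq> {}"
proof -
  show "matching F {e\<in>N. e \<subseteq> A}" using assms(1) by (rule matching_subset) auto
  show "\<Union>{e\<in>N. e \<subseteq> A} \<subseteq> A" by blast
  show "\<forall>e\<in>F. e \<inter> A \<noteq> {} \<longrightarrow> e \<inter> \<Union>{e\<in>N. e \<subseteq> A} \<noteq> {}"
  proof (intro ballI impI)
    fix e assume e: "e \<in> F" "e \<inter> A \<noteq> {}"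
    with assms(2) obtain y where "y \<in> e" "y \<in> \<Union>N" by blast
    then obtain f where f: "f \<in> N" "y \<in> f" by blast
    have "e \<subseteq> A" "f \<in> F" using assms(1,3) e f(1) by (auto simp: edge_closed_def matching_def)
    with f \<open>y \<in> e\<close> have "f \<subseteq> A" using assms(3) unfolding edge_closed_def by blast
    with f \<open>y \<in> e\<close> show "e \<inter> \<Union>{e\<in>N. e \<subseteq> A} \<noteq> {}" by blast
  qed
qed

lemma edge_closed_restrict_outside:
  assumes "matching F N" "\<forall>e\<in>F. e \<inter> \<Union>N \<noteq> {}" "edge_closed F A"
  shows "matching F {e\<in>N. \<not> e \<subseteq> A}" "\<Union>{e\<in>N. \<not> e \<subseteq> A} \<inter> A = {}"
    and "\<forall>e\<in>F. e \<inter> A = {} \<longrightarrow> e \<inter> \<Union>{e\<in>N. \<not> e \<subseteq> A} \<noteq> {}"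
proof -
  show "matching F {e\<in>N. \<not> e \<subseteq> A}" using assms(1) by (rule matching_subset) auto
  have "N \<subseteq> F" using assms(1) by (simp add: matching_def)
  then have "f \<inter> A = {}" if "f \<in> N" "\<not> f \<subseteq> A" for f
    using that assms(3) unfolding edge_closed_def by blast
  then show "\<Union>{e\<in>N. \<not> e \<subseteq> A} \<inter> A = {}" by auto
  show "\<forall>e\<in>F. e \<inter> A = {} \<longrightarrow> e \<inter> \<Union>{e\<in>N. \<not> e \<subseteq> A} \<noteq> {}"
  proof (intro ballI impI)
    fix e assume e: "e \<in> F" "e \<inter> A = {}"
    have "e \<inter> \<Union>N \<noteq> {}" using assms(2) e(1) by blast
    then obtain y where "y \<in> e" "y \<in> \<Union>N" by blast
    then obtain f where f: "f \<in> N" "y \<in> f" by blast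
    with e(2) \<open>y \<in> e\<close> have "f \<in> {e\<in>N. \<not> e \<subseteq> A}" by blast
    with f(2) \<open>y \<in> e\<close> show "e \<inter> \<Union>{e\<in>N. \<not> e \<subseteq> A} \<noteq> {}" by blast
  qed
qed

lemma maximal_matching_insert_edge_Un:
  assumes "{} \<notin> E" "{v, y} \<in> E" "matching E R" "matching E S"
    and "\<Union>R \<subseteq> A" "\<Union>S \<inter> A = {}" "v \<notin> A" "v \<notin> \<Union>S" "y \<notin> \<Union>R" "y \<notin> \<Union>S"
    and "\<forall>e\<in>del_verts E {v}. e \<inter> A \<noteq> {} \<longrightarrow> e \<inter> \<Union>R \<noteq> {}"
    and "\<forall>e\<in>del_verts E (A \<union> {v, y}). e \<inter> \<Union>S \<noteq> {}"
  shows "maximal_matching E (insert {v, y} (R \<union> S))"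
proof -
  have "\<forall>e1\<in>R. \<forall>e2\<in>S. e1 \<inter> e2 = {}" using assms(5,6) by blast
  then have "matching E (R \<union> S)" using assms(3,4) by (rule matching_Un[rotated 2])
  moreover have "\<forall>e\<in>R \<union> S. e \<inter> {v, y} = {}" using assms(5,7-10) by blast
  ultimately have "matching E (insert {v, y} (R \<union> S))" by (rule matching_insert[OF _ assms(2)])
  moreover have "e \<inter> \<Union>(insert {v, y} (R \<union> S)) \<noteq> {}" if "e \<in> E" for e
  proof (cases "e \<inter> {v, y} = {}")
    case True
    show ?thesis
    proof (cases "e \<inter> A = {}")
      case False
      have "e \<in> del_verts E {v}" using that True by (auto simp: del_verts_def)
      with False assms(11) show ?thesis by blast
    next
      case disjoint: True
      have "e \<in> del_verts E (A \<union> {v, y})"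
        using that \<open>e \<inter> {v, y} = {}\<close> disjoint by (auto simp: del_verts_def)
      with assms(12) show ?thesis by blast
    qed
  qed blast
  ultimately show ?thesis using assms(1) maximal_matching_iff_covers by blast
qed

lemma card_insert_edge_Un:
  assumes "finite E" "{} \<notin> E" "matching E R" "matching E S"
    and "\<Union>R \<subseteq> A" "\<Union>S \<inter> A = {}" "v \<notin> A" "v \<notin> \<Union>S"
  shows "card (insert {v, y} (R \<union> S)) = card R + card S + 1"
proof -
  have "R \<subseteq> E" "S \<subseteq> E" using assms(3,4) by (simp_all add: matching_def)
  then have "finite R" "finite S" using assms(1) by (simp_all add: finite_subset)
  moreover have "R \<inter> S = {}"
  proof (rule ccontr)
    assume "R \<inter> S \<noteq> {}"
    then obtain e where "e \<in> R" "e \<in> S" by blast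
    then have "e = {}" using assms(5,6) by blast
    with \<open>e \<in> R\<close> \<open>R \<subseteq> E\<close> assms(2) show False by blast
  qed
  moreover have "{v, y} \<notin> R \<union> S" using assms(5,7,8) by blast
  ultimately show ?thesis by (simp add: card_Un_disjoint)
qed

lemma maximal_matching_del_vertex:
  assumes "{} \<notin> E" "maximal_matching E M" "v \<notin> \<Union>M"
  shows "maximal_matching (del_verts E {v}) M"
proof -
  have "matching E M" "\<forall>e\<in>E. e \<inter> \<Union>M \<noteq> {}"
    using assms(1,2) maximal_matching_iff_covers by blast+
  moreover have "M \<subseteq> del_verts E {v}"
    using \<open>matching E M\<close> assms(3) by (auto simp: matching_def del_verts_def)
  ultimately have "matching (del_verts E {v}) M" "\<forall>e\<in>del_verts E {v}. e \<inter> \<Union>M \<noteq> {}"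
    by (simp_all add: matching_def del_verts_def)
  moreover have "{} \<notin> del_verts E {v}" using assms(1) by (simp add: del_verts_def)
  ultimately show ?thesis using maximal_matching_iff_covers by blast
qed

lemma cut_vertex_component:
  assumes "simple_graph V E" "connected_graph V E" "cut_vertex V E v" "{u, v} \<in> E"
  obtains A x where "edge_closed (del_verts E {v}) A" "u \<in> A" "v \<notin> A" "{v, x} \<in> E" "x \<notin> A"
proof -
  define A where "A = (adj (del_verts E {v}))\<^sup>* `` {u}"
  have "edge_closed (del_verts E {v}) A"
    unfolding A_def using simple_graph_edge_doubleton[OF assms(1)]
    by (intro edge_closed_rtrancl_adj) (simp add: del_verts_def)
  moreover have "u \<in> A" by (simp add: A_def)
  moreover have "v \<notin> A"
  proof
    assume "v \<in> A"
    then have "(u, v) \<in> (adj (del_verts E {v}))\<^sup>*" by (simp add: A_def)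
    from rtrancl_adj_del_vertex_avoids[OF this simple_graph_edge_ends(1)[OF assms(1,4)]]
    show False by simp
  qed
  moreover obtain x where "{x, v} \<in> E" "(u, x) \<notin> (adj (del_verts E {v}))\<^sup>*"
    by (rule cut_vertex_other_neighbour[OF assms])
  then have "{v, x} \<in> E" "x \<notin> A" by (simp_all add: A_def insert_commute)
  ultimately show thesis by (rule that)
qed

text \<open>Both matchings are completed by the same edge vx and the same maximal matching of
  G - A - {v, x}.\<close>
lemma card_inside_edge_closed_eq:
  assumes "equimatchable E" "finite E" "{} \<notin> E"
    and "edge_closed (del_verts E {v}) A" "v \<notin> A" "{v, x} \<in> E" "x \<notin> A"
    and "maximal_matching (del_verts E {v}) N1" "maximal_matching (del_verts E {v}) N2"
  shows "card {e\<in>N1. e \<subseteq> A} = card {e\<in>N2. e \<subseteq> A}"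
proof -
  have "{} \<notin> del_verts E {v}" "{} \<notin> del_verts E (A \<union> {v, x})"
    using assms(3) by (simp_all add: del_verts_def)
  have "finite (del_verts E (A \<union> {v, x}))" using assms(2) by (simp add: del_verts_def)
  then obtain T where "maximal_matching (del_verts E (A \<union> {v, x})) T"
    by (rule exists_maximal_matching)
  then have Tm: "matching (del_verts E (A \<union> {v, x})) T"
    and Tcov: "\<forall>e\<in>del_verts E (A \<union> {v, x}). e \<inter> \<Union>T \<noteq> {}"
    using \<open>{} \<notin> del_verts E (A \<union> {v, x})\<close> maximal_matching_iff_covers by blast+
  have TE: "matching E T" by (rule matching_subset[OF Tm del_verts_subset]) simp
  have "\<Union>T \<inter> (A \<union> {v, x}) = {}" using Tm by (rule matching_del_verts_avoids)
  then have TA: "\<Union>T \<inter> A = {}" and Tv: "v \<notin> \<Union>T" and Tx: "x \<notin> \<Union>T" by auto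
  have completion_card: "card (insert {v, x} ({e\<in>N. e \<subseteq> A} \<union> T)) = card {e\<in>N. e \<subseteq> A} + card T + 1"
    and completion_maximal: "maximal_matching E (insert {v, x} ({e\<in>N. e \<subseteq> A} \<union> T))"
    if "maximal_matching (del_verts E {v}) N" for N
  proof -
    have "matching (del_verts E {v}) N" "\<forall>e\<in>del_verts E {v}. e \<inter> \<Union>N \<noteq> {}"
      using that \<open>{} \<notin> del_verts E {v}\<close> maximal_matching_iff_covers by blast+
    note inside = edge_closed_restrict_inside[OF this assms(4)]
    have R: "matching E {e\<in>N. e \<subseteq> A}"
      by (rule matching_subset[OF inside(1) del_verts_subset]) simp
    have xR: "x \<notin> \<Union>{e\<in>N. e \<subseteq> A}" using inside(2) assms(7) by blast
    show "card (insert {v, x} ({e\<in>N. e \<subseteq> A} \<union> T)) = card {e\<in>N. e \<subseteq> A} + card T + 1"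
      by (rule card_insert_edge_Un[OF assms(2,3) R TE inside(2) TA assms(5) Tv])
    show "maximal_matching E (insert {v, x} ({e\<in>N. e \<subseteq> A} \<union> T))"
      by (rule maximal_matching_insert_edge_Un[OF assms(3,6) R TE inside(2) TA assms(5) Tv xR Tx
            inside(3) Tcov])
  qed
  have "card (insert {v, x} ({e\<in>N1. e \<subseteq> A} \<union> T)) = card (insert {v, x} ({e\<in>N2. e \<subseteq> A} \<union> T))"
    using completion_maximal[OF assms(8)] completion_maximal[OF assms(9)] assms(1)
    unfolding equimatchable_def by blast
  then show ?thesis using completion_card[OF assms(8)] completion_card[OF assms(9)] by simp
qed

lemma weak_cut_vertex_neighbour_strong:
  assumes sg: "simple_graph V E" and con: "connected_graph V E" and eqm: "equimatchable E"
    and cut: "cut_vertex V E v" and weak: "weak_vertex E v" and uv: "{u, v} \<in> E"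
  shows "strong_vertex (del_verts E {v}) u"
proof (rule ccontr)
  let ?Ev = "del_verts E {v}"
  assume "\<not> strong_vertex ?Ev u"
  then obtain P where P: "maximal_matching ?Ev P" "u \<notin> \<Union>P"
    unfolding strong_vertex_def by blast
  obtain M where M: "maximal_matching E M" "v \<notin> \<Union>M"
    using weak unfolding weak_vertex_def strong_vertex_def by blast
  have fin: "finite E" and ne: "{} \<notin> E"
    using simple_graph_finite_edges[OF sg] simple_graph_no_empty_edge[OF sg] .
  obtain A x where closed: "edge_closed ?Ev A" and "u \<in> A" "v \<notin> A" "{v, x} \<in> E" "x \<notin> A"
    by (rule cut_vertex_component[OF sg con cut uv])
  have Mv: "maximal_matching ?Ev M" using ne M by (rule maximal_matching_del_vertex)
  define PA where "PA = {e\<in>P. e \<subseteq> A}"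
  define MA where "MA = {e\<in>M. e \<subseteq> A}"
  define MB where "MB = {e\<in>M. \<not> e \<subseteq> A}"
  have "card PA = card MA"
    unfolding PA_def MA_def
    by (rule card_inside_edge_closed_eq[OF eqm fin ne closed]) fact+
  have neEv: "{} \<notin> ?Ev" using ne by (simp add: del_verts_def)
  have "matching ?Ev P" "\<forall>e\<in>?Ev. e \<inter> \<Union>P \<noteq> {}"
    using P(1) neEv maximal_matching_iff_covers by blast+
  note PA = edge_closed_restrict_inside[OF this closed, folded PA_def]
  have "matching ?Ev M" "\<forall>e\<in>?Ev. e \<inter> \<Union>M \<noteq> {}"
    using Mv neEv maximal_matching_iff_covers by blast+
  note MB = edge_closed_restrict_outside[OF this closed, folded MB_def]
  have PAm: "matching E PA" by (rule matching_subset[OF PA(1) del_verts_subset]) simp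
  have MBm: "matching E MB" by (rule matching_subset[OF MB(1) del_verts_subset]) simp
  have "u \<notin> \<Union>PA" using P(2) by (auto simp: PA_def)
  have "v \<notin> \<Union>MB" using M(2) by (auto simp: MB_def)
  have "u \<notin> \<Union>MB" using MB(2) \<open>u \<in> A\<close> by blast
  have vu: "{v, u} \<in> E" using uv by (simp add: insert_commute)
  have MBcov: "\<forall>e\<in>del_verts E (A \<union> {v, u}). e \<inter> \<Union>MB \<noteq> {}"
  proof
    fix e assume "e \<in> del_verts E (A \<union> {v, u})"
    then have "e \<in> ?Ev" "e \<inter> A = {}" by (auto simp: del_verts_def)
    with MB(3) show "e \<inter> \<Union>MB \<noteq> {}" by blast
  qed
  have "maximal_matching E (insert {v, u} (PA \<union> MB))"
    by (rule maximal_matching_insert_edge_Un[OF ne vu PAm MBm PA(2) MB(2)]) fact+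
  with M(1) have "card (insert {v, u} (PA \<union> MB)) = card M"
    using eqm unfolding equimatchable_def by blast
  moreover have "card (insert {v, u} (PA \<union> MB)) = card PA + card MB + 1"
    by (rule card_insert_edge_Un[OF fin ne PAm MBm PA(2) MB(2)]) fact+
  moreover have "card M = card MA + card MB"
  proof -
    have "M \<subseteq> E" using M(1) by (simp add: maximal_matching_def matching_def)
    then have "finite M" using fin by (rule finite_subset)
    moreover have "M = MA \<union> MB" "MA \<inter> MB = {}" by (auto simp: MA_def MB_def)
    ultimately show ?thesis by (simp add: card_Un_disjoint)
  qed
  ultimately show False using \<open>card PA = card MA\<close> by simp
qed

theorem lemma4p4:
  fixes V :: "'a set" and E :: "'a set set" and v :: 'a
  assumes "simple_graph V E"
    and "connected_graph V E"
    and "edge_stable E"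
    and "cut_vertex V E v"
  shows "(weak_vertex E v \<longrightarrow>
            (\<forall>u\<in>neighbours E v. strong_vertex (del_verts E {v}) u))
       \<and> (strong_vertex E v \<longrightarrow>
            (\<forall>u\<in>neighbours E v. weak_vertex (del_verts E {v}) u)
            \<and> (\<forall>w\<in>neighbours E v. edge_stable (del_verts E {v, w})))"
proof (intro conjI impI ballI)
  have fin: "finite E" and ne: "{} \<notin> E"
    using simple_graph_finite_edges[OF assms(1)] simple_graph_no_empty_edge[OF assms(1)] .
  have eqm: "equimatchable E" using assms(3) by (simp add: edge_stable_def)
  fix u assume "u \<in> neighbours E v"
  then have uv: "{u, v} \<in> E" by (simp add: neighbours_def)
  show "strong_vertex (del_verts E {v}) u" if "weak_vertex E v"
    using weak_cut_vertex_neighbour_strong[OF assms(1,2) eqm assms(4) that uv] .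
  show "weak_vertex (del_verts E {v}) u" if "strong_vertex E v"
    using strong_vertex_neighbour_weak[OF fin ne eqm that uv] .
  have "{v, u} \<in> E" using uv by (simp add: insert_commute)
  then show "edge_stable (del_verts E {v, u})"
    by (rule edge_stable_del_edge_ends[OF assms(3) fin ne])
qed

end
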